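(* Let $i\in\{1,\dots,n\}$, let $F_i$ be the $i$th coordinate face of $\mathbf P$ and let $\eta_i$ be the least element (with respect to $\le$) of the set $P_i$ of weights in $F_i$. Then $F_i$ is a facet of $\mathbf P$ if and only if $(\eta_i,\tilde\omega_j)\ne m_j$ for all $j\ne i$.
   Context: Let $\mathfrak g$ be a finite-dimensional complex simple Lie algebra with root system $\Phi$, base $\Pi=\{\alpha_1,\dots,\alpha_n\}$, Weyl group $W$; $E$ is the real span of $\Pi$ with $W$-invariant inner product $(\cdot,\cdot)$. Let $\omega_i$ be the fundamental weights and $\tilde\omega_i=2\omega_i/(\alpha_i,\alpha_i)$, so $(\tilde\omega_i,\alpha_j)=\delta_{ij}$; thus $(x,\tilde\omega_i)$ is the coefficient of $\alpha_i$ in $x\in E$. Fix a dominant integral weight $\lambda=\sum_i m_i\alpha_i$, and let $P(\lambda)$ be the set of weights of the irreducible module of highest weight $\lambda$. Weight polytope $\mathbf P=\mathrm{conv}(W\lambda)$. $P_i=\{\mu\in P(\lambda)\mid(\mu,\tilde\omega_i)=m_i\}$ and the $i$th coordinate face is $F_i=\mathrm{conv}(P_i)$ (which has a least element in the order $\mu\le\nu$ iff $\nu-\mu$ is a nonnegative integer combination of simple roots). A facet here means a face of dimension $n-1$. *)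

theory Defs
  imports "HOL-Analysis.Analysis"
begin

text \<open>Abstract (reduced, crystallographic) root systems in a Euclidean space 'a,
  which plays the role of E; the inner product of 'a is the W-invariant inner product.\<close>

definition rs_refl :: "'a::euclidean_space \<Rightarrow> 'a \<Rightarrow> 'a" where
  "rs_refl \<alpha> x = x - (2 * inner x \<alpha> / inner \<alpha> \<alpha>) *\<^sub>R \<alpha>"

definition root_system :: "'a::euclidean_space set \<Rightarrow> bool" where
  "root_system \<Phi> \<longleftrightarrow> finite \<Phi> \<and> 0 \<notin> \<Phi> \<and> span \<Phi> = UNIV
     \<and> (\<forall>\<alpha>\<in>\<Phi>. \<forall>\<beta>\<in>\<Phi>. rs_refl \<alpha> \<beta> \<in> \<Phi>)
     \<and> (\<forall>\<alpha>\<in>\<Phi>. \<forall>\<beta>\<in>\<Phi>. 2 * inner \<beta> \<alpha> / inner \<alpha> \<alpha> \<in> \<int>)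
     \<and> (\<forall>\<alpha>\<in>\<Phi>. \<forall>c::real. c *\<^sub>R \<alpha> \<in> \<Phi> \<longrightarrow> c = 1 \<or> c = -1)"

definition irreducible_rs :: "'a::euclidean_space set \<Rightarrow> bool" where
  "irreducible_rs \<Phi> \<longleftrightarrow> \<not> (\<exists>A B. A \<noteq> {} \<and> B \<noteq> {} \<and> A \<union> B = \<Phi> \<and> A \<inter> B = {}
       \<and> (\<forall>a\<in>A. \<forall>b\<in>B. inner a b = 0))"

definition is_base :: "'a::euclidean_space set \<Rightarrow> ('i::finite \<Rightarrow> 'a) \<Rightarrow> bool" where
  "is_base \<Phi> alpha \<longleftrightarrow> inj alpha \<and> range alpha \<subseteq> \<Phi>
     \<and> independent (range alpha) \<and> span (range alpha) = UNIV
     \<and> (\<forall>\<beta>\<in>\<Phi>. \<exists>c::'i \<Rightarrow> int. \<beta> = (\<Sum>i\<in>UNIV. of_int (c i) *\<^sub>R alpha i)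
            \<and> ((\<forall>i. c i \<ge> 0) \<or> (\<forall>i. c i \<le> 0)))"

inductive_set weyl_group :: "'a::euclidean_space set \<Rightarrow> ('a \<Rightarrow> 'a) set" for \<Phi> where
  weyl_id: "id \<in> weyl_group \<Phi>"
| weyl_step: "w \<in> weyl_group \<Phi> \<Longrightarrow> \<alpha> \<in> \<Phi> \<Longrightarrow> rs_refl \<alpha> \<circ> w \<in> weyl_group \<Phi>"

text \<open>Fundamental weights omega_i: (omega_i, alpha_j^vee) = delta_ij, and
  omega-tilde_i = 2 omega_i / (alpha_i, alpha_i).\<close>
definition fund_weight :: "('i::finite \<Rightarrow> 'a::euclidean_space) \<Rightarrow> 'i \<Rightarrow> 'a" where
  "fund_weight alpha i = (THE v. \<forall>j. 2 * inner v (alpha j) / inner (alpha j) (alpha j)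
                                      = (if j = i then 1 else 0))"

definition omt :: "('i::finite \<Rightarrow> 'a::euclidean_space) \<Rightarrow> 'i \<Rightarrow> 'a" where
  "omt alpha i = (2 / inner (alpha i) (alpha i)) *\<^sub>R fund_weight alpha i"

definition dominant_integral :: "('i::finite \<Rightarrow> 'a::euclidean_space) \<Rightarrow> 'a \<Rightarrow> bool" where
  "dominant_integral alpha lam \<longleftrightarrow>
     (\<forall>i. \<exists>k::nat. 2 * inner lam (alpha i) / inner (alpha i) (alpha i) = real k)"

definition weight_le :: "('i::finite \<Rightarrow> 'a::euclidean_space) \<Rightarrow> 'a \<Rightarrow> 'a \<Rightarrow> bool" where
  "weight_le alpha \<mu> \<nu> \<longleftrightarrow> (\<exists>c::'i \<Rightarrow> nat. \<nu> - \<mu> = (\<Sum>i\<in>UNIV. of_nat (c i) *\<^sub>R alpha i))"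

text \<open>Weights of the irreducible module of highest weight lam (lam dominant integral),
  via the classical characterization (Humphreys, Sec. 21.3): mu is a weight iff
  w mu \<le> lam for every w in W.\<close>
definition weights :: "'a::euclidean_space set \<Rightarrow> ('i::finite \<Rightarrow> 'a) \<Rightarrow> 'a \<Rightarrow> 'a set" where
  "weights \<Phi> alpha lam = {\<mu>. \<forall>w\<in>weyl_group \<Phi>. weight_le alpha (w \<mu>) lam}"

definition weight_polytope :: "'a::euclidean_space set \<Rightarrow> 'a \<Rightarrow> 'a set" where
  "weight_polytope \<Phi> lam = convex hull ((\<lambda>w. w lam) ` weyl_group \<Phi>)"

text \<open>P_i: weights whose alpha_i-coordinate equals m_i = (lam, omega-tilde_i).\<close>
definition coord_weights :: "'a::euclidean_space set \<Rightarrow> ('i::finite \<Rightarrow> 'a) \<Rightarrow> 'a \<Rightarrow> 'i \<Rightarrow> 'a set" where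
  "coord_weights \<Phi> alpha lam i =
     {\<mu> \<in> weights \<Phi> alpha lam. inner \<mu> (omt alpha i) = inner lam (omt alpha i)}"

definition coord_face :: "'a::euclidean_space set \<Rightarrow> ('i::finite \<Rightarrow> 'a) \<Rightarrow> 'a \<Rightarrow> 'i \<Rightarrow> 'a set" where
  "coord_face \<Phi> alpha lam i = convex hull (coord_weights \<Phi> alpha lam i)"

definition is_facet :: "'a::euclidean_space set \<Rightarrow> 'a set \<Rightarrow> bool" where
  "is_facet F S \<longleftrightarrow> F face_of S \<and> aff_dim F = int DIM('a) - 1"

end

theory Submission
  imports Defs
begin

text \<open>Writing \<open>x\<^sub>j\<close> for the \<open>\<alpha>\<^sub>j\<close>-coordinate, the supporting hyperplane \<open>x\<^sub>i = m\<^sub>i\<close> cuts out the face \<open>F\<^sub>i\<close>, and it suffices to compute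
  the dimension of the span of the differences \<open>\<mu> - \<eta>\<close>, \<open>\<mu> \<in> P\<^sub>i\<close>.
  If \<open>\<eta>\<^sub>j = m\<^sub>j\<close> for some \<open>j \<noteq> i\<close>, then every \<open>\<mu> \<in> P\<^sub>i\<close>, squeezed between \<open>\<eta>\<close> and
  \<open>\<lambda>\<close> in the dominance order, has \<open>\<alpha>\<^sub>j\<close>-coordinate \<open>m\<^sub>j\<close> as well, so \<open>F\<^sub>i\<close> has codimension
  at least two. Conversely, \<open>P\<^sub>i\<close> is stable under the reflections \<open>s\<^sub>j\<close>, \<open>j \<noteq> i\<close>, so
  \<open>\<alpha>\<^sub>j\<close> lies in that span as soon as some \<open>\<mu> \<in> P\<^sub>i\<close> is not orthogonal to \<open>\<alpha>\<^sub>j\<close>. The simple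
  roots \<open>\<alpha>\<^sub>j\<close>, \<open>j \<noteq> i\<close>, outside the span are therefore orthogonal to \<open>P\<^sub>i\<close> and to all other
  simple roots in the support of \<open>\<lambda> - \<eta>\<close>; hence their part of \<open>\<lambda> - \<eta>\<close> is orthogonal to
  itself, i.e. zero, which forces \<open>\<eta>\<^sub>j = m\<^sub>j\<close>.\<close>

section \<open>Reflections\<close>

lemma rs_refl_linear: "linear (rs_refl b)"
  unfolding rs_refl_def
  by (rule linearI) (simp_all add: inner_add_left add_divide_distrib scaleR_add_left algebra_simps)

lemma rs_refl_inner: "b \<noteq> 0 \<Longrightarrow> inner (rs_refl b x) (rs_refl b y) = inner x y"
  by (simp add: rs_refl_def inner_diff_left inner_diff_right inner_commute field_simps)

lemma rs_refl_self_adjoint: "inner (rs_refl b x) y = inner x (rs_refl b y)"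
  by (simp add: rs_refl_def inner_diff_left inner_diff_right inner_commute field_simps)

lemma rs_refl_rs_refl: "b \<noteq> 0 \<Longrightarrow> rs_refl b (rs_refl b x) = x"
  by (simp add: rs_refl_def inner_diff_left inner_commute field_simps algebra_simps)

lemma rs_refl_self: "b \<noteq> 0 \<Longrightarrow> rs_refl b b = - b"
  by (simp add: rs_refl_def scaleR_2 algebra_simps)

lemma rs_refl_uminus: "rs_refl (- b) = rs_refl b"
  by (auto simp: rs_refl_def fun_eq_iff)

lemma rs_refl_isometry_conj:
  assumes "linear w" "\<And>x y. inner (w x) (w y) = inner x y"
  shows "rs_refl (w b) (w x) = w (rs_refl b x)"
  using assms by (simp add: rs_refl_def linear_diff linear_scale)

lemma rs_refl_rs_refl_conj:
  assumes "a \<noteq> 0"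
  shows "rs_refl (rs_refl a b) = rs_refl a \<circ> rs_refl b \<circ> rs_refl a"
proof
  fix x
  have "rs_refl (rs_refl a b) (rs_refl a (rs_refl a x)) = rs_refl a (rs_refl b (rs_refl a x))"
    by (rule rs_refl_isometry_conj) (simp_all add: rs_refl_linear rs_refl_inner assms)
  then show "rs_refl (rs_refl a b) x = (rs_refl a \<circ> rs_refl b \<circ> rs_refl a) x"
    by (simp add: rs_refl_rs_refl assms)
qed

section \<open>Simple roots and coordinates\<close>

locale based_root_system =
  fixes Phi :: "'a::euclidean_space set" and alpha :: "'i::finite \<Rightarrow> 'a"
  assumes root_system: "root_system Phi" and base: "is_base Phi alpha"
begin

lemma finite_Phi: "finite Phi" and zero_notin: "0 \<notin> Phi"
  and rs_refl_in_Phi: "a \<in> Phi \<Longrightarrow> b \<in> Phi \<Longrightarrow> rs_refl a b \<in> Phi"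
  and cartan_integer: "a \<in> Phi \<Longrightarrow> b \<in> Phi \<Longrightarrow> 2 * inner b a / inner a a \<in> \<int>"
  and multiple_of_root: "a \<in> Phi \<Longrightarrow> c *\<^sub>R a \<in> Phi \<Longrightarrow> c = 1 \<or> c = -1"
  using root_system unfolding root_system_def by auto

lemma inj_alpha: "inj alpha" and alpha_in: "alpha j \<in> Phi"
  and independent_simple_roots: "independent (range alpha)"
  and span_simple_roots: "span (range alpha) = UNIV"
  and root_coeffs_same_sign: "b \<in> Phi \<Longrightarrow> \<exists>c::'i \<Rightarrow> int. b = (\<Sum>i\<in>UNIV. of_int (c i) *\<^sub>R alpha i)
            \<and> ((\<forall>i. c i \<ge> 0) \<or> (\<forall>i. c i \<le> 0))"
  using base unfolding is_base_def by auto

lemma alpha_nonzero: "alpha j \<noteq> 0"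
  using alpha_in zero_notin by metis

lemma alpha_inner_self_pos: "inner (alpha j) (alpha j) > 0"
  using alpha_nonzero by simp

lemma simple_root_expansion: "\<exists>c. x = (\<Sum>k\<in>UNIV. c k *\<^sub>R alpha k)"
proof -
  have "x \<in> span (range alpha)" using span_simple_roots by simp
  then obtain u where u: "(\<Sum>v\<in>range alpha. u v *\<^sub>R v) = x"
    using span_finite[of "range alpha"] by auto
  have "(\<Sum>v\<in>range alpha. u v *\<^sub>R v) = (\<Sum>k\<in>UNIV. u (alpha k) *\<^sub>R alpha k)"
    using sum.reindex[OF inj_alpha, of "\<lambda>v. u v *\<^sub>R v"] by simp
  then show ?thesis using u by metis
qed

lemma orthogonal_simple_roots_imp_zero:
  assumes "\<And>k. inner x (alpha k) = 0"
  shows "x = 0"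
proof -
  obtain c where c: "x = (\<Sum>k\<in>UNIV. c k *\<^sub>R alpha k)" using simple_root_expansion by blast
  have "inner x x = (\<Sum>k\<in>UNIV. c k * inner x (alpha k))"
    by (subst (2) c) (simp add: inner_sum_right)
  also have "\<dots> = 0" using assms by simp
  finally show ?thesis by simp
qed

lemma dual_vector_exists: "\<exists>v. \<forall>k. inner v (alpha k) = (if k = j then 1 else 0)"
proof -
  obtain g where g: "linear g" "\<forall>x\<in>range alpha. g x = (if x = alpha j then 1 else (0::real))"
    using linear_independent_extend[OF independent_simple_roots,
        of "\<lambda>x. if x = alpha j then 1 else (0::real)"] by blast
  define v where "v = (\<Sum>b\<in>Basis. g b *\<^sub>R b)"
  have vx: "inner v x = g x" for x
  proof -
    have "g x = g (\<Sum>b\<in>Basis. (x \<bullet> b) *\<^sub>R b)" by (simp add: euclidean_representation)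
    also have "\<dots> = (\<Sum>b\<in>Basis. (x \<bullet> b) * g b)"
      using g(1) by (simp add: linear_sum linear_scale)
    also have "\<dots> = (\<Sum>b\<in>Basis. g b * (b \<bullet> x))" by (simp add: inner_commute mult.commute)
    also have "\<dots> = inner v x" by (simp add: v_def inner_sum_left)
    finally show ?thesis by simp
  qed
  show ?thesis
    by (rule exI[of _ v]) (use vx g(2) inj_alpha in \<open>auto simp: inj_eq\<close>)
qed

lemma fund_weight_coroot:
  "2 * inner (fund_weight alpha j) (alpha k) / inner (alpha k) (alpha k) = (if k = j then 1 else 0)"
proof -
  let ?P = "\<lambda>v. \<forall>k. 2 * inner v (alpha k) / inner (alpha k) (alpha k) = (if k = j then 1 else 0)"
  obtain d where d: "\<forall>k. inner d (alpha k) = (if k = j then 1 else 0)"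
    using dual_vector_exists by blast
  define v where "v = (inner (alpha j) (alpha j) / 2) *\<^sub>R d"
  have "?P v" using d alpha_inner_self_pos by (auto simp: v_def)
  moreover have "w = v" if "?P w" for w
  proof -
    have "inner (w - v) (alpha k) = 0" for k
      using spec[OF that, of k] spec[OF \<open>?P v\<close>, of k] alpha_inner_self_pos[of k]
      by (simp add: inner_diff_left field_simps split: if_splits)
    then show ?thesis using orthogonal_simple_roots_imp_zero by force
  qed
  ultimately have "?P (THE v. ?P v)" by (rule theI)
  then show ?thesis unfolding fund_weight_def by blast
qed

lemma inner_alpha_omt: "inner (alpha k) (omt alpha j) = (if k = j then 1 else 0)"
  using fund_weight_coroot[of j k] alpha_inner_self_pos[of k] alpha_inner_self_pos[of j]
  by (auto simp: omt_def inner_commute field_simps split: if_splits)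

lemma omt_coordinate: "inner (\<Sum>k\<in>UNIV. c k *\<^sub>R alpha k) (omt alpha j) = c j"
  by (simp add: inner_sum_left inner_alpha_omt if_distrib if_distribR cong: if_cong)

lemma omt_nonzero: "omt alpha j \<noteq> 0"
  using inner_alpha_omt[of j j] by auto

lemma card_index_eq_DIM: "card (UNIV :: 'i set) = DIM('a)"
proof -
  have "dim (UNIV :: 'a set) = card (range alpha)"
    by (rule dim_eq_card) (simp_all add: span_simple_roots independent_simple_roots)
  then show ?thesis using inj_alpha by (simp add: card_image)
qed

lemma dim_simple_roots_but_one: "dim (alpha ` (- {i})) = DIM('a) - 1"
proof -
  have "independent (alpha ` (- {i}))"
    using independent_simple_roots by (rule independent_mono) auto
  then have "dim (alpha ` (- {i})) = card (alpha ` (- {i}))"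
    by (rule dim_eq_card_independent)
  also have "\<dots> = card (- {i} :: 'i set)"
    using inj_alpha by (simp add: card_image inj_on_subset)
  also have "\<dots> = card (UNIV :: 'i set) - 1"
    by (simp add: Compl_eq_Diff_UNIV)
  finally show ?thesis using card_index_eq_DIM by simp
qed

lemma coeffs_vanish_on_orthogonal_block:
  assumes x: "x = (\<Sum>k\<in>UNIV. c k *\<^sub>R alpha k)"
    and orth_x: "\<And>k. k \<in> B \<Longrightarrow> inner x (alpha k) = 0"
    and orth_rest: "\<And>k k'. k \<in> B \<Longrightarrow> k' \<notin> B \<Longrightarrow> c k' \<noteq> 0 \<Longrightarrow> inner (alpha k') (alpha k) = 0"
    and "j \<in> B"
  shows "c j = 0"
proof -
  define g where "g = (\<Sum>k\<in>B. c k *\<^sub>R alpha k)"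
  define h where "h = (\<Sum>k\<in>-B. c k *\<^sub>R alpha k)"
  have "x = g + h"
    unfolding x g_def h_def by (subst sum.union_disjoint[symmetric]) (auto simp: Compl_partition)
  moreover have "inner h (alpha k) = 0" if "k \<in> B" for k
    unfolding h_def inner_sum_left using orth_rest[OF that] by (intro sum.neutral) auto
  ultimately have g_orth: "inner g (alpha k) = 0" if "k \<in> B" for k
    using orth_x[OF that] that by (simp add: inner_add_left)
  have "inner g g = (\<Sum>k\<in>B. c k * inner g (alpha k))"
    by (subst (2) g_def) (simp add: inner_sum_right)
  also have "\<dots> = 0" using g_orth by simp
  finally have "g = 0" by simp
  moreover have "inner g (omt alpha j) = c j"
    unfolding g_def inner_sum_left using \<open>j \<in> B\<close>
    by (simp add: inner_alpha_omt if_distrib if_distribR cong: if_cong)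
  ultimately show ?thesis by simp
qed

definition nonneg_comb :: "'a \<Rightarrow> bool" where
  "nonneg_comb b \<longleftrightarrow> (\<exists>c::'i \<Rightarrow> nat. b = (\<Sum>k\<in>UNIV. of_nat (c k) *\<^sub>R alpha k))"

lemma weight_le_iff_nonneg_comb: "weight_le alpha \<mu> \<nu> \<longleftrightarrow> nonneg_comb (\<nu> - \<mu>)"
  by (simp add: weight_le_def nonneg_comb_def)

lemma omt_coordinate_nat:
  "inner (\<Sum>k\<in>UNIV. of_nat (c k) *\<^sub>R alpha k) (omt alpha j) = of_nat (c j)"
  using omt_coordinate[of "\<lambda>k. of_nat (c k)"] by simp

lemma nonneg_comb_coordinate: "nonneg_comb b \<Longrightarrow> inner b (omt alpha j) \<ge> 0"
  unfolding nonneg_comb_def using omt_coordinate_nat by fastforce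

lemma nonneg_comb_zero: "nonneg_comb 0"
  unfolding nonneg_comb_def by (rule exI[of _ "\<lambda>_. 0"]) simp

lemma nonneg_comb_alpha: "nonneg_comb (alpha k)"
proof -
  have "alpha k = (\<Sum>i\<in>UNIV. of_nat (if i = k then 1 else 0) *\<^sub>R alpha i)"
    by (simp add: if_distrib if_distribR cong: if_cong)
  then show ?thesis unfolding nonneg_comb_def by (rule exI[of _ "\<lambda>i. if i = k then 1 else 0"])
qed

lemma nonneg_comb_add:
  assumes "nonneg_comb a" "nonneg_comb b"
  shows "nonneg_comb (a + b)"
proof -
  obtain c d where "a = (\<Sum>k\<in>UNIV. of_nat (c k) *\<^sub>R alpha k)" "b = (\<Sum>k\<in>UNIV. of_nat (d k) *\<^sub>R alpha k)"
    using assms nonneg_comb_def by blast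
  then have "a + b = (\<Sum>k\<in>UNIV. of_nat (c k + d k) *\<^sub>R alpha k)"
    by (simp add: sum.distrib[symmetric] scaleR_add_left)
  then show ?thesis unfolding nonneg_comb_def by (rule exI[of _ "\<lambda>k. c k + d k"])
qed

lemma nonneg_comb_scaleR_nat:
  assumes "nonneg_comb a"
  shows "nonneg_comb (of_nat n *\<^sub>R a)"
proof -
  obtain c where "a = (\<Sum>k\<in>UNIV. of_nat (c k) *\<^sub>R alpha k)" using assms nonneg_comb_def by blast
  then have "of_nat n *\<^sub>R a = (\<Sum>k\<in>UNIV. of_nat (n * c k) *\<^sub>R alpha k)"
    by (simp add: scaleR_sum_right)
  then show ?thesis unfolding nonneg_comb_def by (rule exI[of _ "\<lambda>k. n * c k"])
qed

lemma nonneg_comb_antisym: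
  assumes "nonneg_comb b" "nonneg_comb (- b)"
  shows "b = 0"
proof -
  obtain c where c: "b = (\<Sum>k\<in>UNIV. c k *\<^sub>R alpha k)" using simple_root_expansion by blast
  have "c k = 0" for k
    using nonneg_comb_coordinate[OF assms(1), of k] nonneg_comb_coordinate[OF assms(2), of k]
      omt_coordinate[of c k] by (simp add: c)
  then show ?thesis using c by simp
qed

lemma inner_nonneg_comb_nonneg:
  assumes "\<And>j. inner d (alpha j) \<ge> 0" "nonneg_comb v"
  shows "inner d v \<ge> 0"
proof -
  obtain c where "v = (\<Sum>k\<in>UNIV. of_nat (c k) *\<^sub>R alpha k)" using assms(2) nonneg_comb_def by blast
  then show ?thesis using assms(1) by (simp add: inner_sum_right sum_nonneg)
qed

lemma nonneg_comb_imp_inner_alpha_pos: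
  assumes "b \<noteq> 0" "nonneg_comb b"
  shows "\<exists>j. inner b (alpha j) > 0"
proof (rule ccontr)
  assume "\<not> ?thesis"
  then have "inner (- b) (alpha j) \<ge> 0" for j by (simp add: not_less)
  then have "inner (- b) b \<ge> 0" using assms(2) by (rule inner_nonneg_comb_nonneg)
  then show False using assms(1) by (metis inner_gt_zero_iff inner_minus_left neg_0_le_iff_le not_le)
qed

lemma root_nonneg_comb_or_neg:
  assumes "b \<in> Phi"
  shows "nonneg_comb b \<or> nonneg_comb (- b)"
proof -
  obtain c :: "'i \<Rightarrow> int" where c: "b = (\<Sum>i\<in>UNIV. of_int (c i) *\<^sub>R alpha i)"
    and sign: "(\<forall>i. c i \<ge> 0) \<or> (\<forall>i. c i \<le> 0)"
    using root_coeffs_same_sign[OF assms] by blast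
  show ?thesis
  proof (cases "\<forall>i. c i \<ge> 0")
    case True
    then have "b = (\<Sum>i\<in>UNIV. of_nat (nat (c i)) *\<^sub>R alpha i)" using c by simp
    then show ?thesis unfolding nonneg_comb_def by (intro disjI1) (rule exI)
  next
    case False
    then have "\<forall>i. c i \<le> 0" using sign by auto
    then have "- b = (\<Sum>i\<in>UNIV. of_nat (nat (- c i)) *\<^sub>R alpha i)"
      using c by (simp add: sum_negf[symmetric])
    then show ?thesis unfolding nonneg_comb_def by (intro disjI2) (rule exI)
  qed
qed

lemma simple_refl_root: "b \<in> Phi \<Longrightarrow> rs_refl (alpha j) b \<in> Phi"
  using rs_refl_in_Phi alpha_in by blast

lemma simple_refl_coordinate:
  "k \<noteq> j \<Longrightarrow> inner (rs_refl (alpha j) b) (omt alpha k) = inner b (omt alpha k)"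
  by (simp add: rs_refl_def inner_diff_left inner_alpha_omt)

text \<open>A positive root other than \<open>\<alpha>\<^sub>j\<close> has a positive coordinate \<open>k \<noteq> j\<close>, which \<open>s\<^sub>j\<close>
  does not change.\<close>

lemma simple_refl_positive_root:
  assumes "b \<in> Phi" "nonneg_comb b" "b \<noteq> alpha j"
  shows "nonneg_comb (rs_refl (alpha j) b)"
proof -
  obtain c where c: "b = (\<Sum>k\<in>UNIV. of_nat (c k) *\<^sub>R alpha k)"
    using assms(2) nonneg_comb_def by blast
  obtain k where k: "k \<noteq> j" "c k > 0"
  proof (rule ccontr)
    assume "\<not> thesis"
    then have "\<forall>k. k \<noteq> j \<longrightarrow> c k = 0" using that by blast
    then have bj: "b = of_nat (c j) *\<^sub>R alpha j"
      unfolding c by (subst sum.remove[of UNIV j]) auto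
    then have "c j = 1" using multiple_of_root[OF alpha_in, of "real (c j)"] assms(1) by auto
    then show False using bj assms(3) by simp
  qed
  have "inner (- rs_refl (alpha j) b) (omt alpha k) < 0"
    using simple_refl_coordinate[OF k(1)] c omt_coordinate_nat k(2) by simp
  then have "\<not> nonneg_comb (- rs_refl (alpha j) b)"
    using nonneg_comb_coordinate by (meson not_le)
  then show ?thesis using root_nonneg_comb_or_neg simple_refl_root[OF assms(1)] by blast
qed

definition height :: "'a \<Rightarrow> real" where
  "height b = (\<Sum>k\<in>UNIV. inner b (omt alpha k))"

lemma height_nonneg: "nonneg_comb b \<Longrightarrow> height b \<ge> 0"
  unfolding height_def by (intro sum_nonneg nonneg_comb_coordinate)

lemma height_uminus: "height (- b) = - height b"
  by (simp add: height_def sum_negf)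

lemma height_simple_refl:
  "height (rs_refl (alpha j) b) = height b - 2 * inner b (alpha j) / inner (alpha j) (alpha j)"
proof -
  define t where "t = 2 * inner b (alpha j) / inner (alpha j) (alpha j)"
  have "height (rs_refl (alpha j) b) = (\<Sum>k\<in>UNIV. inner b (omt alpha k) - t * (if j = k then 1 else 0))"
    unfolding height_def t_def by (simp add: rs_refl_def inner_diff_left inner_alpha_omt)
  also have "\<dots> = height b - t" by (simp add: height_def sum_subtractf flip: sum_distrib_left)
  finally show ?thesis by (simp add: t_def)
qed

section \<open>The Weyl group\<close>

primrec rword :: "'i list \<Rightarrow> 'a \<Rightarrow> 'a" where
  "rword [] = id"
| "rword (j # l) = rs_refl (alpha j) \<circ> rword l"

lemma rword_append: "rword (l1 @ l2) = rword l1 \<circ> rword l2"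
  by (induction l1) auto

lemma rword_linear: "linear (rword l)"
proof (induction l)
  case Nil
  show ?case by (simp only: rword.simps) (rule linearI, simp_all)
next
  case (Cons j l)
  then show ?case by (simp only: rword.simps) (rule linear_compose[OF _ rs_refl_linear])
qed

lemma rword_inner: "inner (rword l x) (rword l y) = inner x y"
  by (induction l arbitrary: x y) (auto simp: rs_refl_inner alpha_nonzero)

lemma rword_adjoint: "inner (rword l x) y = inner x (rword (rev l) y)"
  by (induction l arbitrary: x y) (auto simp: rs_refl_self_adjoint rword_append)

lemma rword_root: "b \<in> Phi \<Longrightarrow> rword l b \<in> Phi"
  by (induction l) (auto simp: simple_refl_root)

lemma rword_conj: "rs_refl (rword l b) \<circ> rword l = rword l \<circ> rs_refl b"
  using rs_refl_isometry_conj[OF rword_linear rword_inner] by (auto simp: fun_eq_iff)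

lemma rword_in_weyl_group: "rword l \<in> weyl_group Phi"
proof (induction l)
  case Nil
  show ?case by (simp only: rword.simps weyl_group.weyl_id)
next
  case (Cons j l)
  then show ?case by (simp only: rword.simps) (rule weyl_group.weyl_step[OF _ alpha_in])
qed

text \<open>Induction on the height: if \<open>(b, \<alpha>\<^sub>j) > 0\<close> and \<open>b \<noteq> \<alpha>\<^sub>j\<close>, then \<open>b' = s\<^sub>j b\<close> is a lower
  positive root and \<open>s\<^sub>b = s\<^sub>j s\<^sub>b\<^sub>' s\<^sub>j\<close>.\<close>

lemma rs_refl_positive_root_rword:
  assumes "b \<in> Phi" "nonneg_comb b" "height b < real n"
  shows "\<exists>l. rs_refl b = rword l"
  using assms
proof (induction n arbitrary: b)
  case 0
  then show ?case using height_nonneg[of b] by simp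
next
  case (Suc n)
  have "b \<noteq> 0" using Suc.prems(1) zero_notin by auto
  then obtain j where j: "inner b (alpha j) > 0"
    using nonneg_comb_imp_inner_alpha_pos Suc.prems(2) by blast
  show ?case
  proof (cases "b = alpha j")
    case True
    then show ?thesis by (intro exI[of _ "[j]"]) auto
  next
    case False
    define b' where "b' = rs_refl (alpha j) b"
    define t where "t = 2 * inner b (alpha j) / inner (alpha j) (alpha j)"
    have "t \<in> \<int>" "t > 0"
      using cartan_integer[OF alpha_in Suc.prems(1)] j alpha_inner_self_pos[of j] by (simp_all add: t_def)
    then have "t \<ge> 1"
      by (metis Ints_cases int_one_le_iff_zero_less of_int_0_less_iff of_int_1_le_iff)
    moreover have "height b' = height b - t" by (simp add: b'_def height_simple_refl t_def)
    ultimately have "height b' < real n" using Suc.prems(3) by simp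
    moreover have "b' \<in> Phi" "nonneg_comb b'"
      using simple_refl_root[OF Suc.prems(1)] simple_refl_positive_root[OF Suc.prems(1,2) False]
      by (simp_all add: b'_def)
    ultimately obtain l where l: "rs_refl b' = rword l" using Suc.IH by blast
    have "b = rs_refl (alpha j) b'" by (simp add: b'_def rs_refl_rs_refl alpha_nonzero)
    then have "rs_refl b = rword (j # l @ [j])"
      by (simp add: rs_refl_rs_refl_conj alpha_nonzero l rword_append comp_assoc)
    then show ?thesis by blast
  qed
qed

lemma rs_refl_root_rword:
  assumes "b \<in> Phi"
  shows "\<exists>l. rs_refl b = rword l"
proof -
  obtain n :: nat where "\<bar>height b\<bar> < real n" using reals_Archimedean2 by blast
  then have n: "height b < real n" "height (- b) < real n" by (auto simp: height_uminus)
  have "- b \<in> Phi" using rs_refl_in_Phi[OF assms assms] rs_refl_self zero_notin assms by metis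
  show ?thesis
  proof (cases "nonneg_comb b")
    case True
    then show ?thesis using rs_refl_positive_root_rword assms n(1) by blast
  next
    case False
    then have "nonneg_comb (- b)" using root_nonneg_comb_or_neg assms by blast
    then show ?thesis
      using rs_refl_positive_root_rword[OF \<open>- b \<in> Phi\<close> _ n(2)] rs_refl_uminus by metis
  qed
qed

lemma weyl_group_rword: "w \<in> weyl_group Phi \<Longrightarrow> \<exists>l. w = rword l"
proof (induction rule: weyl_group.induct)
  case weyl_id
  show ?case by (intro exI[of _ "[]"]) simp
next
  case (weyl_step w a)
  then obtain l l' where "w = rword l" "rs_refl a = rword l'" using rs_refl_root_rword by blast
  then show ?case by (intro exI[of _ "l' @ l"]) (simp add: rword_append)
qed

lemma weyl_group_comp: "w \<in> weyl_group Phi \<Longrightarrow> v \<in> weyl_group Phi \<Longrightarrow> w \<circ> v \<in> weyl_group Phi"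
  by (induction rule: weyl_group.induct) (auto simp: comp_assoc intro: weyl_group.intros)

lemma weyl_group_linear: "w \<in> weyl_group Phi \<Longrightarrow> linear w"
  using weyl_group_rword rword_linear by blast

lemma weyl_group_root: "w \<in> weyl_group Phi \<Longrightarrow> b \<in> Phi \<Longrightarrow> w b \<in> Phi"
  using weyl_group_rword rword_root by blast

lemma linear_eq_on_simple_roots:
  assumes "linear f" "linear g" "\<And>k. f (alpha k) = g (alpha k)"
  shows "f = g"
proof
  fix x
  obtain c where c: "x = (\<Sum>k\<in>UNIV. c k *\<^sub>R alpha k)" using simple_root_expansion by blast
  show "f x = g x" unfolding c
    by (simp add: linear_sum[OF assms(1)] linear_sum[OF assms(2)] linear_scale[OF assms(1)]
        linear_scale[OF assms(2)] assms(3))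
qed

text \<open>An element of \<open>W\<close> is determined by its values on the simple roots, which are roots.\<close>

lemma finite_weyl_group: "finite (weyl_group Phi)"
proof -
  let ?r = "\<lambda>w. restrict w (range alpha)"
  have "inj_on ?r (weyl_group Phi)"
  proof (rule inj_onI)
    fix w v assume wv: "w \<in> weyl_group Phi" "v \<in> weyl_group Phi" "?r w = ?r v"
    have "w (alpha k) = v (alpha k)" for k using fun_cong[OF wv(3), of "alpha k"] by simp
    then show "w = v"
      by (rule linear_eq_on_simple_roots[OF weyl_group_linear[OF wv(1)] weyl_group_linear[OF wv(2)]])
  qed
  moreover have "?r ` weyl_group Phi \<subseteq> (\<Pi>\<^sub>E x \<in> range alpha. Phi)"
    using weyl_group_root alpha_in by (auto simp: restrict_PiE_iff)
  moreover have "finite (\<Pi>\<^sub>E x \<in> range alpha. Phi)"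
    by (intro finite_PiE) (auto simp: finite_Phi)
  ultimately show ?thesis by (metis finite_imageD finite_subset)
qed

lemma rword_deletion:
  "nonneg_comb (- rword l (alpha k)) \<Longrightarrow> \<exists>l'. length l' < length l \<and> rword l' = rword l \<circ> rs_refl (alpha k)"
proof (induction l)
  case Nil
  then show ?case using nonneg_comb_antisym[OF nonneg_comb_alpha] alpha_nonzero by simp
next
  case (Cons a t)
  show ?case
  proof (cases "nonneg_comb (- rword t (alpha k))")
    case True
    then obtain t' where "length t' < length t" "rword t' = rword t \<circ> rs_refl (alpha k)"
      using Cons.IH by blast
    then show ?thesis by (intro exI[of _ "a # t'"]) (simp add: comp_assoc)
  next
    case False
    have r: "rword t (alpha k) \<in> Phi" using rword_root alpha_in by blast
    then have p: "nonneg_comb (rword t (alpha k))" using False root_nonneg_comb_or_neg by blast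
    have "rword t (alpha k) = alpha a"
    proof (rule ccontr)
      assume "rword t (alpha k) \<noteq> alpha a"
      then have "nonneg_comb (rs_refl (alpha a) (rword t (alpha k)))"
        using simple_refl_positive_root[OF r p] by blast
      moreover have "nonneg_comb (- rs_refl (alpha a) (rword t (alpha k)))" using Cons.prems by simp
      ultimately have "rs_refl (alpha a) (rword t (alpha k)) = 0" by (rule nonneg_comb_antisym)
      then show False using simple_refl_root[OF r, of a] zero_notin by metis
    qed
    then have "rs_refl (alpha a) \<circ> rword t = rword t \<circ> rs_refl (alpha k)"
      using rword_conj[of t "alpha k"] by simp
    then have "rword (a # t) \<circ> rs_refl (alpha k) = rword t"
      by (simp add: comp_assoc fun_eq_iff rs_refl_rs_refl alpha_nonzero)
    then show ?thesis by (intro exI[of _ t]) (simp add: comp_def)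
  qed
qed

definition reduced_rword :: "'i list \<Rightarrow> bool" where
  "reduced_rword l \<longleftrightarrow> (\<forall>l'. rword l' = rword l \<longrightarrow> length l \<le> length l')"

lemma reduced_rword_exists: "\<exists>l'. rword l' = rword l \<and> reduced_rword l'"
proof (induction "length l" arbitrary: l rule: less_induct)
  case less
  show ?case
  proof (cases "reduced_rword l")
    case False
    then obtain l' where "rword l' = rword l" "length l' < length l"
      unfolding reduced_rword_def by force
    then show ?thesis using less by metis
  qed blast
qed

lemma reduced_rword_butlast: "reduced_rword (l @ [k]) \<Longrightarrow> reduced_rword l"
  unfolding reduced_rword_def
proof (intro allI impI)
  fix l' assume "\<forall>l''. rword l'' = rword (l @ [k]) \<longrightarrow> length (l @ [k]) \<le> length l''"
    and "rword l' = rword l"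
  moreover from this have "rword (l' @ [k]) = rword (l @ [k])" by (simp add: rword_append)
  ultimately show "length l \<le> length l'" by force
qed

text \<open>For a reduced word \<open>l @ [k]\<close> and \<open>w = rword l\<close> the root \<open>w \<alpha>\<^sub>k\<close> is positive by \<open>rword_deletion\<close>, so
  \<open>\<lambda> - w s\<^sub>k \<lambda> = (\<lambda> - w \<lambda>) + \<langle>\<lambda>, \<alpha>\<^sub>k\<^sup>\<or>\<rangle> w \<alpha>\<^sub>k\<close> stays a nonnegative combination.\<close>

lemma dominant_minus_reduced_rword:
  assumes D: "dominant_integral alpha lam"
  shows "reduced_rword l \<Longrightarrow> nonneg_comb (lam - rword l lam)"
proof (induction l rule: rev_induct)
  case Nil
  then show ?case by (simp add: nonneg_comb_zero)
next
  case (snoc k l)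
  have "\<not> nonneg_comb (- rword l (alpha k))"
  proof
    assume "nonneg_comb (- rword l (alpha k))"
    then obtain l' where "length l' < length l" "rword l' = rword l \<circ> rs_refl (alpha k)"
      using rword_deletion by blast
    then show False using snoc.prems unfolding reduced_rword_def by (force simp: rword_append)
  qed
  then have pos: "nonneg_comb (rword l (alpha k))"
    using root_nonneg_comb_or_neg rword_root alpha_in by blast
  obtain n :: nat where n: "2 * inner lam (alpha k) / inner (alpha k) (alpha k) = real n"
    using D unfolding dominant_integral_def by blast
  have "rs_refl (alpha k) lam = lam - real n *\<^sub>R alpha k" by (simp add: rs_refl_def n)
  then have "rword (l @ [k]) lam = rword l lam - real n *\<^sub>R rword l (alpha k)"
    by (simp add: rword_append linear_diff[OF rword_linear] linear_scale[OF rword_linear])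
  then have eq: "lam - rword (l @ [k]) lam = (lam - rword l lam) + of_nat n *\<^sub>R rword l (alpha k)"
    by simp
  show ?case unfolding eq
    by (rule nonneg_comb_add[OF snoc.IH[OF reduced_rword_butlast[OF snoc.prems]] nonneg_comb_scaleR_nat[OF pos]])
qed

lemma dominant_minus_weyl_image:
  assumes "dominant_integral alpha lam" "w \<in> weyl_group Phi"
  shows "nonneg_comb (lam - w lam)"
proof -
  obtain l where "w = rword l" using weyl_group_rword assms(2) by blast
  moreover obtain l' where "rword l' = rword l" "reduced_rword l'" using reduced_rword_exists by blast
  ultimately show ?thesis using dominant_minus_reduced_rword[OF assms(1)] by metis
qed

section \<open>Weights and the weight polytope\<close>

lemma highest_weight_in_weights: "dominant_integral alpha lam \<Longrightarrow> lam \<in> weights Phi alpha lam"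
  unfolding weights_def using dominant_minus_weyl_image by (simp add: weight_le_iff_nonneg_comb)

lemma weyl_image_in_weights:
  assumes "\<mu> \<in> weights Phi alpha lam" "w \<in> weyl_group Phi"
  shows "w \<mu> \<in> weights Phi alpha lam"
  using assms weyl_group_comp unfolding weights_def by fastforce

lemma weight_le_highest: "\<mu> \<in> weights Phi alpha lam \<Longrightarrow> nonneg_comb (lam - \<mu>)"
  unfolding weights_def using weyl_group.weyl_id weight_le_iff_nonneg_comb by fastforce

definition inversion_set :: "'a \<Rightarrow> 'a set" where
  "inversion_set x = {b \<in> Phi. nonneg_comb b \<and> inner x b < 0}"

lemma inversion_set_simple_refl:
  assumes "inner x (alpha j) < 0"
  shows "inversion_set (rs_refl (alpha j) x) \<subseteq> rs_refl (alpha j) ` (inversion_set x - {alpha j})"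
proof
  fix b assume "b \<in> inversion_set (rs_refl (alpha j) x)"
  then have b: "b \<in> Phi" "nonneg_comb b" "inner (rs_refl (alpha j) x) b < 0"
    unfolding inversion_set_def by auto
  have "inner (rs_refl (alpha j) x) (alpha j) = - inner x (alpha j)"
    by (simp add: rs_refl_self_adjoint rs_refl_self alpha_nonzero)
  then have "b \<noteq> alpha j" using b(3) assms by auto
  define g where "g = rs_refl (alpha j) b"
  have g: "g \<in> Phi" "nonneg_comb g"
    using simple_refl_root[OF b(1)] simple_refl_positive_root[OF b(1,2) \<open>b \<noteq> alpha j\<close>]
    by (auto simp: g_def)
  have "inner x g < 0" using b(3) by (simp add: g_def rs_refl_self_adjoint)
  moreover have "g \<noteq> alpha j"
  proof
    assume "g = alpha j"
    then have "b = - alpha j" unfolding g_def by (metis rs_refl_rs_refl rs_refl_self alpha_nonzero)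
    then show False using nonneg_comb_antisym[OF nonneg_comb_alpha] b(2) alpha_nonzero by simp
  qed
  moreover have "b = rs_refl (alpha j) g" by (simp add: g_def rs_refl_rs_refl alpha_nonzero)
  ultimately show "b \<in> rs_refl (alpha j) ` (inversion_set x - {alpha j})"
    using g unfolding inversion_set_def by auto
qed

lemma dominant_rword_image_exists: "\<exists>l. \<forall>j. inner (rword l x) (alpha j) \<ge> 0"
proof (induction "card (inversion_set x)" arbitrary: x rule: less_induct)
  case less
  show ?case
  proof (cases "\<forall>j. inner x (alpha j) \<ge> 0")
    case True
    then show ?thesis by (intro exI[of _ "[]"]) simp
  next
    case False
    then obtain j where j: "inner x (alpha j) < 0" by (auto simp: not_le)
    have fin: "finite (inversion_set x)" unfolding inversion_set_def using finite_Phi by simp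
    have "alpha j \<in> inversion_set x"
      unfolding inversion_set_def using alpha_in nonneg_comb_alpha j by simp
    then have "card (inversion_set x - {alpha j}) < card (inversion_set x)"
      by (rule card_Diff1_less[OF fin])
    have "card (inversion_set (rs_refl (alpha j) x))
        \<le> card (rs_refl (alpha j) ` (inversion_set x - {alpha j}))"
      using inversion_set_simple_refl[OF j] fin by (intro card_mono) auto
    also have "\<dots> \<le> card (inversion_set x - {alpha j})" by (rule card_image_le) (use fin in auto)
    also have "\<dots> < card (inversion_set x)" by fact
    finally have "card (inversion_set (rs_refl (alpha j) x)) < card (inversion_set x)" .
    then obtain l where "\<forall>k. inner (rword l (rs_refl (alpha j) x)) (alpha k) \<ge> 0" using less by blast
    then show ?thesis by (intro exI[of _ "l @ [j]"]) (simp add: rword_append)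
  qed
qed

text \<open>Separate \<open>\<mu>\<close> from the polytope by a hyperplane and move its normal into the dominant
  chamber; there \<open>\<mu> \<le> \<lambda>\<close> yields the opposite inequality.\<close>

lemma weights_subset_weight_polytope: "weights Phi alpha lam \<subseteq> weight_polytope Phi lam"
proof
  fix \<mu> assume mu: "\<mu> \<in> weights Phi alpha lam"
  show "\<mu> \<in> weight_polytope Phi lam"
  proof (rule ccontr)
    assume nm: "\<mu> \<notin> weight_polytope Phi lam"
    have "closed (weight_polytope Phi lam)" unfolding weight_polytope_def
      using finite_weyl_group by (intro compact_imp_closed compact_convex_hull finite_imp_compact) simp
    then obtain a b where ab: "inner a \<mu> < b" "\<forall>x\<in>weight_polytope Phi lam. inner a x > b"
      using separating_hyperplane_closed_point[OF _ _ nm] unfolding weight_polytope_def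
      by (metis convex_convex_hull)
    obtain l where l: "\<forall>j. inner (rword l (- a)) (alpha j) \<ge> 0"
      using dominant_rword_image_exists by blast
    have "nonneg_comb (lam - rword l \<mu>)"
      using weight_le_highest weyl_image_in_weights[OF mu rword_in_weyl_group] by blast
    then have "inner (rword l (- a)) (lam - rword l \<mu>) \<ge> 0"
      using inner_nonneg_comb_nonneg l by blast
    then have "inner (rword l (- a)) (rword l \<mu>) \<le> inner (rword l (- a)) lam"
      by (simp add: inner_diff_right)
    then have "inner (- a) \<mu> \<le> inner (- a) (rword (rev l) lam)"
      unfolding rword_inner[of l "- a" \<mu>] rword_adjoint[of l "- a" lam] .
    moreover have "rword (rev l) lam \<in> weight_polytope Phi lam"
      unfolding weight_polytope_def by (rule hull_inc) (use rword_in_weyl_group in blast)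
    ultimately show False using ab by (force simp: inner_minus_left)
  qed
qed

section \<open>Coordinate faces\<close>

lemma coord_weights_simple_refl:
  assumes "\<mu> \<in> coord_weights Phi alpha lam i" "j \<noteq> i"
  shows "rs_refl (alpha j) \<mu> \<in> coord_weights Phi alpha lam i"
  using assms weyl_image_in_weights[OF _ rword_in_weyl_group[of "[j]"]] simple_refl_coordinate[of i j \<mu>]
  unfolding coord_weights_def by auto

text \<open>If \<open>\<eta>\<^sub>j = m\<^sub>j\<close>, then \<open>\<mu>\<^sub>j = m\<^sub>j\<close> for every \<open>\<mu> \<in> P\<^sub>i\<close>, since \<open>\<eta> \<le> \<mu> \<le> \<lambda>\<close>; so \<open>F\<^sub>i\<close> lies
  in the hyperplane \<open>x\<^sub>j = m\<^sub>j\<close>, which does not contain the hyperplane \<open>x\<^sub>i = m\<^sub>i\<close>.\<close>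

lemma coord_face_not_facet:
  assumes eta: "\<eta> \<in> coord_weights Phi alpha lam i"
    and least: "\<forall>\<mu>\<in>coord_weights Phi alpha lam i. weight_le alpha \<eta> \<mu>"
    and "j \<noteq> i" and eq: "inner \<eta> (omt alpha j) = inner lam (omt alpha j)"
  shows "\<not> is_facet (coord_face Phi alpha lam i) (weight_polytope Phi lam)"
proof
  assume facet: "is_facet (coord_face Phi alpha lam i) (weight_polytope Phi lam)"
  let ?Pi = "coord_weights Phi alpha lam i"
  let ?F = "coord_face Phi alpha lam i"
  define Hi where "Hi = {x. inner (omt alpha i) x = inner lam (omt alpha i)}"
  define Hj where "Hj = {x. inner (omt alpha j) x = inner lam (omt alpha j)}"
  have "?Pi \<subseteq> Hi \<inter> Hj"
  proof
    fix \<mu> assume mu: "\<mu> \<in> ?Pi"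
    have "inner (\<mu> - \<eta>) (omt alpha j) \<ge> 0"
      using least mu by (simp add: weight_le_iff_nonneg_comb nonneg_comb_coordinate)
    moreover have "inner (lam - \<mu>) (omt alpha j) \<ge> 0"
      using mu weight_le_highest nonneg_comb_coordinate unfolding coord_weights_def by blast
    ultimately show "\<mu> \<in> Hi \<inter> Hj" using eq mu
      unfolding Hi_def Hj_def coord_weights_def
      by (auto simp: inner_diff_left inner_diff_right inner_commute)
  qed
  then have FH: "affine hull ?F \<subseteq> Hi \<inter> Hj" unfolding coord_face_def
    by (simp add: hull_minimal affine_hyperplane affine_Int affine_hull_convex_hull Hi_def Hj_def)
  have "affine hull ?F = Hi"
  proof (rule affine_dim_equal)
    show "affine hull ?F \<noteq> {}" using eta hull_subset[of ?Pi convex] unfolding coord_face_def by auto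
    show "aff_dim (affine hull ?F) = aff_dim Hi"
      using facet omt_nonzero[of i] unfolding is_facet_def Hi_def by simp
  qed (use FH in \<open>auto simp: Hi_def affine_hyperplane\<close>)
  moreover have "lam + alpha j \<in> Hi" "lam + alpha j \<notin> Hj"
    using \<open>j \<noteq> i\<close> by (simp_all add: Hi_def Hj_def inner_add_right inner_commute inner_alpha_omt)
  ultimately show False using FH by blast
qed

lemma simple_root_in_span_coord_weight_diffs:
  assumes D: "dominant_integral alpha lam"
    and eta: "\<eta> \<in> coord_weights Phi alpha lam i"
    and off: "\<forall>j. j \<noteq> i \<longrightarrow> inner \<eta> (omt alpha j) \<noteq> inner lam (omt alpha j)"
    and "j \<noteq> i"
  shows "alpha j \<in> span ((\<lambda>x. x - \<eta>) ` coord_weights Phi alpha lam i)"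
proof (rule ccontr)
  assume j_out: "alpha j \<notin> span ((\<lambda>x. x - \<eta>) ` coord_weights Phi alpha lam i)"
  let ?Pi = "coord_weights Phi alpha lam i"
  define Dd where "Dd = (\<lambda>x. x - \<eta>) ` ?Pi"
  have diff: "x - y \<in> span Dd" if "x \<in> ?Pi" "y \<in> ?Pi" for x y
    using span_diff[of "x - \<eta>" Dd "y - \<eta>"] that by (simp add: Dd_def span_base)
  have reflect: "alpha k \<in> span Dd" if "\<mu> \<in> ?Pi" "k \<noteq> i" "inner \<mu> (alpha k) \<noteq> 0" for \<mu> k
  proof -
    define t where "t = 2 * inner \<mu> (alpha k) / inner (alpha k) (alpha k)"
    have "t \<noteq> 0" using that(3) alpha_inner_self_pos[of k] by (simp add: t_def)
    have "rs_refl (alpha k) \<mu> - \<mu> \<in> span Dd"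
      using diff coord_weights_simple_refl that(1,2) by blast
    moreover have "rs_refl (alpha k) \<mu> - \<mu> = (- t) *\<^sub>R alpha k" by (simp add: rs_refl_def t_def)
    ultimately have "(- 1 / t) *\<^sub>R ((- t) *\<^sub>R alpha k) \<in> span Dd" by (metis span_mul)
    then show ?thesis using \<open>t \<noteq> 0\<close> by simp
  qed
  define B where "B = {k. k \<noteq> i \<and> alpha k \<notin> span Dd}"
  have orth_B: "inner \<mu> (alpha k) = 0" if "k \<in> B" "\<mu> \<in> ?Pi" for k \<mu>
    using reflect that unfolding B_def by blast
  obtain c where c: "lam - \<eta> = (\<Sum>k\<in>UNIV. of_nat (c k) *\<^sub>R alpha k)"
    using eta weight_le_highest unfolding coord_weights_def nonneg_comb_def by blast
  have "c i = 0"
    using omt_coordinate_nat[of c i] eta unfolding c[symmetric] coord_weights_def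
    by (simp add: inner_diff_left)
  have "real (c j) = 0"
  proof (rule coeffs_vanish_on_orthogonal_block[OF c])
    show "inner (lam - \<eta>) (alpha k) = 0" if "k \<in> B" for k
      using orth_B[OF that] eta D highest_weight_in_weights
      by (simp add: inner_diff_left coord_weights_def)
    show "inner (alpha k') (alpha k) = 0" if "k \<in> B" "k' \<notin> B" "real (c k') \<noteq> 0" for k k'
    proof -
      have "alpha k' \<in> span Dd" using that \<open>c i = 0\<close> unfolding B_def by auto
      moreover have "orthogonal (alpha k) d" if "d \<in> Dd" for d
        using that orth_B[OF \<open>k \<in> B\<close>] eta
        by (auto simp: Dd_def orthogonal_def inner_diff_right inner_commute)
      ultimately show ?thesis using orthogonal_to_span by (metis orthogonal_def inner_commute)
    qed
    show "j \<in> B" using \<open>j \<noteq> i\<close> j_out by (simp add: B_def Dd_def)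
  qed
  then have "inner (lam - \<eta>) (omt alpha j) = 0" using c omt_coordinate_nat by simp
  then show False using off \<open>j \<noteq> i\<close> by (simp add: inner_diff_left) metis
qed

lemma aff_dim_coord_face_ge:
  assumes "dominant_integral alpha lam"
    and eta: "\<eta> \<in> coord_weights Phi alpha lam i"
    and "\<forall>j. j \<noteq> i \<longrightarrow> inner \<eta> (omt alpha j) \<noteq> inner lam (omt alpha j)"
  shows "aff_dim (coord_face Phi alpha lam i) \<ge> int DIM('a) - 1"
proof -
  define Dd where "Dd = (\<lambda>x. x - \<eta>) ` coord_weights Phi alpha lam i"
  have "alpha ` (- {i}) \<subseteq> span Dd"
    using simple_root_in_span_coord_weight_diffs[OF assms] by (auto simp: Dd_def)
  then have "DIM('a) - 1 \<le> dim Dd"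
    using dim_subset dim_span dim_simple_roots_but_one by metis
  moreover have "aff_dim (coord_face Phi alpha lam i) = int (dim Dd)"
    unfolding coord_face_def aff_dim_convex_hull Dd_def
    by (rule aff_dim_eq_dim_subtract) (rule hull_inc[OF eta])
  ultimately show ?thesis using DIM_positive[where 'a='a] by linarith
qed

lemma aff_dim_coord_face_le: "aff_dim (coord_face Phi alpha lam i) \<le> int DIM('a) - 1"
proof -
  define H where "H = {x. inner (omt alpha i) x = inner lam (omt alpha i)}"
  have "coord_weights Phi alpha lam i \<subseteq> H" by (auto simp: coord_weights_def H_def inner_commute)
  then have "coord_face Phi alpha lam i \<subseteq> H" unfolding coord_face_def
    by (rule hull_minimal) (simp add: H_def convex_hyperplane)
  then have "aff_dim (coord_face Phi alpha lam i) \<le> aff_dim H" by (rule aff_dim_subset)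
  then show ?thesis using omt_nonzero[of i] by (simp add: H_def)
qed

lemma weight_polytope_coordinate_le:
  assumes "dominant_integral alpha lam" "x \<in> weight_polytope Phi lam"
  shows "inner (omt alpha i) x \<le> inner lam (omt alpha i)"
proof -
  have "inner (omt alpha i) (w lam) \<le> inner lam (omt alpha i)" if "w \<in> weyl_group Phi" for w
    using nonneg_comb_coordinate[OF dominant_minus_weyl_image[OF assms(1) that], of i]
    by (simp add: inner_diff_left inner_diff_right inner_commute)
  then have "weight_polytope Phi lam \<subseteq> {x. inner (omt alpha i) x \<le> inner lam (omt alpha i)}"
    unfolding weight_polytope_def by (intro hull_minimal) (auto simp: convex_halfspace_le)
  then show ?thesis using assms(2) by blast
qed

text \<open>A face of the convex hull of finitely many points is the convex hull of the points it
  contains, and the points of the orbit \<open>W \<lambda>\<close> on the hyperplane lie in \<open>P\<^sub>i\<close>.\<close>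

lemma coord_face_eq_supporting_face:
  fixes lam :: 'a and i :: 'i
  assumes D: "dominant_integral alpha lam"
  defines "H \<equiv> {x. inner (omt alpha i) x = inner lam (omt alpha i)}"
  shows "coord_face Phi alpha lam i = weight_polytope Phi lam \<inter> H"
    and "(weight_polytope Phi lam \<inter> H) face_of weight_polytope Phi lam"
proof -
  let ?O = "(\<lambda>w. w lam) ` weyl_group Phi"
  show face: "(weight_polytope Phi lam \<inter> H) face_of weight_polytope Phi lam"
    unfolding H_def using weight_polytope_coordinate_le[OF D]
    by (intro face_of_Int_supporting_hyperplane_le) (auto simp: weight_polytope_def)
  show "coord_face Phi alpha lam i = weight_polytope Phi lam \<inter> H"
  proof
    show "coord_face Phi alpha lam i \<subseteq> weight_polytope Phi lam \<inter> H"
      unfolding coord_face_def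
    proof (rule hull_minimal)
      show "coord_weights Phi alpha lam i \<subseteq> weight_polytope Phi lam \<inter> H"
        using weights_subset_weight_polytope by (auto simp: coord_weights_def H_def inner_commute)
    qed (simp add: weight_polytope_def H_def convex_Int convex_hyperplane)
    have "compact ?O" using finite_weyl_group by (intro finite_imp_compact) simp
    then obtain S where S: "S \<subseteq> ?O" "weight_polytope Phi lam \<inter> H = convex hull S"
      using face_of_convex_hull_subset face unfolding weight_polytope_def by metis
    have "S \<subseteq> coord_weights Phi alpha lam i"
    proof
      fix s assume s: "s \<in> S"
      then have "s \<in> H" using S(2) hull_subset[of S convex] by blast
      moreover have "s \<in> weights Phi alpha lam"
        using S(1) s weyl_image_in_weights highest_weight_in_weights[OF D] by blast
      ultimately show "s \<in> coord_weights Phi alpha lam i"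
        by (simp add: coord_weights_def H_def inner_commute)
    qed
    then show "weight_polytope Phi lam \<inter> H \<subseteq> coord_face Phi alpha lam i"
      unfolding coord_face_def S(2) by (rule hull_mono)
  qed
qed

lemma coord_face_is_facet:
  assumes "dominant_integral alpha lam"
    and "\<eta> \<in> coord_weights Phi alpha lam i"
    and "\<forall>j. j \<noteq> i \<longrightarrow> inner \<eta> (omt alpha j) \<noteq> inner lam (omt alpha j)"
  shows "is_facet (coord_face Phi alpha lam i) (weight_polytope Phi lam)"
proof -
  have "aff_dim (coord_face Phi alpha lam i) = int DIM('a) - 1"
    using aff_dim_coord_face_le[of lam i] aff_dim_coord_face_ge[OF assms] by linarith
  then show ?thesis
    using coord_face_eq_supporting_face[OF assms(1), of i] by (simp add: is_facet_def)
qed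

end

theorem corollary4p7:
  fixes \<Phi> :: "'a::euclidean_space set" and alpha :: "'i::finite \<Rightarrow> 'a"
    and lam \<eta> :: 'a and i :: 'i
  assumes "root_system \<Phi>" and "irreducible_rs \<Phi>" and "is_base \<Phi> alpha"
    and "dominant_integral alpha lam"
    and "\<eta> \<in> coord_weights \<Phi> alpha lam i"
    and "\<forall>\<mu>\<in>coord_weights \<Phi> alpha lam i. weight_le alpha \<eta> \<mu>"
  shows "is_facet (coord_face \<Phi> alpha lam i) (weight_polytope \<Phi> lam) \<longleftrightarrow>
         (\<forall>j. j \<noteq> i \<longrightarrow> inner \<eta> (omt alpha j) \<noteq> inner lam (omt alpha j))"
proof -
  interpret based_root_system \<Phi> alpha using assms(1,3) by unfold_locales
  show ?thesis
    using coord_face_not_facet[OF assms(5,6)] coord_face_is_facet[OF assms(4,5)] by blast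
qed

end
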